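(* Let $f(z)$ and $g(z)$ be two non-constant entire functions with ${\rm Aut}(f)\subseteq{\rm Aut}(g)$. Then $f'$ divides $g'$ in the algebra of entire functions, i.e. there is an entire function $H$ with $g'(z)=H(z)f'(z)$. Moreover, there exists a function $G(w,z)$, entire in $w$ and holomorphic in $z\in\mathbb{C}-g^{-1}(g(0))-f^{-1}(f(0))$, such that $g(w)-g(z)=(f(w)-f(z))\cdot G(w,z)$.
   Context: For a non-constant entire function $f$, an automorphic function of $f$ is a (generally multivalued) analytic function $\phi$, or a branch of one on a domain, satisfying $f(\phi(z))=f(z)$; ${\rm Aut}(f)$ is the set (group under composition) of all of them. ${\rm Aut}(f)\subseteq{\rm Aut}(g)$ means every automorphic function of $f$ is an automorphic function of $g$. *)

theory Defs
  imports "HOL-Complex_Analysis.Complex_Analysis"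
begin

text \<open>A branch of an automorphic function of f on a domain U (nonempty open connected set):
  an analytic phi on U with f (phi z) = f z for all z in U.\<close>
definition aut_branch :: "(complex \<Rightarrow> complex) \<Rightarrow> complex set \<Rightarrow> (complex \<Rightarrow> complex) \<Rightarrow> bool" where
  "aut_branch f U \<phi> \<longleftrightarrow> open U \<and> connected U \<and> U \<noteq> {} \<and> \<phi> holomorphic_on U \<and>
     (\<forall>z\<in>U. f (\<phi> z) = f z)"

definition Aut_subset :: "(complex \<Rightarrow> complex) \<Rightarrow> (complex \<Rightarrow> complex) \<Rightarrow> bool" where
  "Aut_subset f g \<longleftrightarrow> (\<forall>U \<phi>. aut_branch f U \<phi> \<longrightarrow> aut_branch g U \<phi>)"

end

theory Submission
  imports Defs
begin

text \<open>If \<open>\<psi>\<close> is a local inverse of \<open>f\<close> near a regular point \<open>q\<close>, then \<open>\<psi> \<circ> f\<close> is an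
  automorphic function of \<open>f\<close> near any \<open>p\<close> with \<open>f p = f q\<close> and maps \<open>p\<close> to \<open>q\<close>; as it is also
  automorphic for \<open>g\<close>, we get \<open>g p = g q\<close>. Regular points are dense and \<open>f\<close> is an open map, so
  \<open>g\<close> is constant on every fibre of \<open>f\<close> and factors as \<open>g = N \<circ> f\<close> on the open set \<open>f(\<complex>)\<close>.
  The map \<open>N\<close> is holomorphic at regular values (it is \<open>g \<circ> \<psi>\<close> there), and the critical points
  are isolated, so every critical value is a removable singularity of the continuous function
  \<open>N\<close>. Then \<open>g' = (N' \<circ> f) f'\<close>, and \<open>G(w, z)\<close> is the difference quotient of \<open>N\<close> at
  \<open>(f w, f z)\<close>.\<close>

lemma holomorphic_local_inverse:
  assumes "f holomorphic_on S" "open S" "q \<in> S" "deriv f q \<noteq> 0"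
  obtains W \<psi> where "open W" "f q \<in> W" "\<psi> holomorphic_on W" "\<And>y. y \<in> W \<Longrightarrow> f (\<psi> y) = y"
    "\<psi> (f q) = q"
proof -
  obtain r where r: "r > 0" "ball q r \<subseteq> S" "open (f ` ball q r)" "inj_on f (ball q r)"
    by (rule has_complex_derivative_locally_invertible[OF assms(1,3,2,4)])
  show ?thesis
  proof (rule holomorphic_has_inverse[OF holomorphic_on_subset[OF assms(1) r(2)] open_ball r(4)])
    fix \<psi> assume \<psi>: "\<psi> holomorphic_on f ` ball q r" "\<And>z. z \<in> ball q r \<Longrightarrow> \<psi> (f z) = z"
    show thesis
    proof (rule that[OF r(3) _ \<psi>(1)])
      show "f q \<in> f ` ball q r" "\<psi> (f q) = q"
        using r(1) \<psi>(2) by simp_all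
      show "\<And>y. y \<in> f ` ball q r \<Longrightarrow> f (\<psi> y) = y"
        using \<psi>(2) by auto
    qed
  qed
qed

lemma entire_eventually_deriv_nonzero:
  assumes hf: "f holomorphic_on UNIV" and nc: "\<not> f constant_on UNIV"
  shows "\<forall>\<^sub>F w in at z. deriv f w \<noteq> 0"
proof -
  have "\<exists>\<beta>. deriv f \<beta> \<noteq> 0"
  proof (rule ccontr)
    assume "\<nexists>\<beta>. deriv f \<beta> \<noteq> 0"
    then have "\<And>x. (f has_field_derivative 0) (at x within UNIV)"
      using hf by (metis DERIV_deriv_iff_field_differentiable UNIV_I
          holomorphic_on_imp_differentiable_at open_UNIV)
    then have "f constant_on UNIV"
      using has_field_derivative_zero_constant[of UNIV f] unfolding constant_on_def by auto
    with nc show False ..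
  qed
  then obtain \<beta> where "deriv f \<beta> \<noteq> 0" ..
  then show ?thesis
    using non_zero_neighbour_alt[OF holomorphic_deriv[OF hf open_UNIV] open_UNIV connected_UNIV
        UNIV_I UNIV_I] by simp
qed

lemma Aut_subset_fibre_regular:
  assumes hf: "f holomorphic_on UNIV" and A: "Aut_subset f g"
    and reg: "deriv f q \<noteq> 0" and fibre: "f p = f q"
  shows "g p = g q"
proof -
  obtain W \<psi> where W: "open W" "f q \<in> W" "\<psi> holomorphic_on W" "\<And>y. y \<in> W \<Longrightarrow> f (\<psi> y) = y"
    "\<psi> (f q) = q"
    using holomorphic_local_inverse[OF hf open_UNIV UNIV_I reg] by blast
  have "open (f -` W)"
    using W(1) holomorphic_on_imp_continuous_on[OF hf] by (simp add: continuous_on_open_vimage)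
  then obtain \<epsilon> where \<epsilon>: "\<epsilon> > 0" "ball p \<epsilon> \<subseteq> f -` W"
    using W(2) fibre by (metis open_contains_ball vimageI2)
  have "aut_branch f (ball p \<epsilon>) (\<psi> \<circ> f)"
    unfolding aut_branch_def using \<epsilon> W(4)
    by (auto intro!: holomorphic_on_compose_gen[OF holomorphic_on_subset[OF hf] W(3)])
  then have "aut_branch g (ball p \<epsilon>) (\<psi> \<circ> f)"
    using A unfolding Aut_subset_def by blast
  then have "g (\<psi> (f p)) = g p"
    unfolding aut_branch_def using \<epsilon>(1) by auto
  then show ?thesis
    using fibre W(5) by simp
qed

lemma entire_open_mapping:
  assumes "f holomorphic_on UNIV" "\<not> f constant_on UNIV" "open U"
  shows "open (f ` U)"
  using open_mapping_thm[OF assms(1) open_UNIV connected_UNIV assms(3) _ assms(2)] by simp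

lemma Aut_subset_fibre:
  assumes hf: "f holomorphic_on UNIV" and nc: "\<not> f constant_on UNIV"
    and hg: "g holomorphic_on UNIV" and A: "Aut_subset f g" and fibre: "f a = f b"
  shows "g a = g b"
proof -
  have cont: "isCont g x" "isCont f x" for x
    using hf hg
    by (simp_all add: holomorphic_on_imp_differentiable_at field_differentiable_imp_continuous_at)
  have "dist (g a) (g b) < \<epsilon>" if "\<epsilon> > 0" for \<epsilon>
  proof -
    obtain d\<^sub>a where d\<^sub>a: "d\<^sub>a > 0" "\<And>x. dist x a < d\<^sub>a \<Longrightarrow> dist (g x) (g a) < \<epsilon>/2"
      using cont(1)[of a] \<open>\<epsilon> > 0\<close> unfolding continuous_at_eps_delta by (meson half_gt_zero)
    have "open (f ` ball a d\<^sub>a)" "f a \<in> f ` ball a d\<^sub>a"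
      using entire_open_mapping[OF hf nc] d\<^sub>a(1) by simp_all
    then obtain \<eta> where \<eta>: "\<eta> > 0" "ball (f a) \<eta> \<subseteq> f ` ball a d\<^sub>a"
      using open_contains_ball by blast
    obtain d\<^sub>g where d\<^sub>g: "d\<^sub>g > 0" "\<And>x. dist x b < d\<^sub>g \<Longrightarrow> dist (g x) (g b) < \<epsilon>/2"
      using cont(1)[of b] \<open>\<epsilon> > 0\<close> unfolding continuous_at_eps_delta by (meson half_gt_zero)
    obtain d\<^sub>f where d\<^sub>f: "d\<^sub>f > 0" "\<And>x. dist x b < d\<^sub>f \<Longrightarrow> dist (f x) (f b) < \<eta>"
      using cont(2)[of b] \<eta>(1) unfolding continuous_at_eps_delta by meson
    have "\<forall>\<^sub>F z in at b. deriv f z \<noteq> 0 \<and> z \<in> ball b (min d\<^sub>g d\<^sub>f)"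
      using entire_eventually_deriv_nonzero[OF hf nc] eventually_at_ball[of "min d\<^sub>g d\<^sub>f" b UNIV]
        d\<^sub>g(1) d\<^sub>f(1) by (simp add: eventually_conj)
    then obtain z where z: "deriv f z \<noteq> 0" "dist z b < min d\<^sub>g d\<^sub>f"
      using eventually_happens'[OF at_neq_bot] by (auto simp: dist_commute)
    then have "f z \<in> f ` ball a d\<^sub>a"
      using d\<^sub>f(2)[of z] \<eta>(2) fibre by (auto simp: dist_commute)
    then obtain w where w: "dist a w < d\<^sub>a" "f w = f z" by auto
    have "dist (g a) (g b) \<le> dist (g w) (g a) + dist (g z) (g b)"
      using Aut_subset_fibre_regular[OF hf A z(1) w(2)] dist_triangle[of "g a" "g b" "g w"]
      by (simp add: dist_commute)
    also have "\<dots> < \<epsilon>"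
      using d\<^sub>a(2)[of w] d\<^sub>g(2)[of z] w z by (simp add: dist_commute)
    finally show ?thesis .
  qed
  then show ?thesis
    using dist_pos_lt by blast
qed

definition factor_map :: "('a \<Rightarrow> 'b) \<Rightarrow> ('a \<Rightarrow> 'c) \<Rightarrow> 'b \<Rightarrow> 'c" where
  "factor_map f g u = g (SOME x. f x = u)"

lemma factor_map_eq:
  assumes "\<And>a b. f a = f b \<Longrightarrow> g a = g b"
  shows "factor_map f g (f x) = g x"
  unfolding factor_map_def by (metis (mono_tags) assms someI)

lemma factor_map_continuous_on:
  fixes f :: "'a::topological_space \<Rightarrow> 'b::topological_space" and g :: "'a \<Rightarrow> 'c::topological_space"
  assumes fibres: "\<And>a b. f a = f b \<Longrightarrow> g a = g b"
    and "continuous_on UNIV g" and open_map: "\<And>U. open U \<Longrightarrow> open (f ` U)"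
  shows "continuous_on (range f) (factor_map f g)"
  unfolding continuous_on_open_invariant
proof (intro allI impI)
  fix B :: "'c set"
  assume "open B"
  let ?A = "f ` (g -` B)"
  have "open ?A"
    using open_map open_vimage[OF \<open>open B\<close> assms(2)] .
  moreover have "?A \<inter> range f = factor_map f g -` B \<inter> range f"
    using factor_map_eq[of f g, OF fibres] by auto
  ultimately show "\<exists>A. open A \<and> A \<inter> range f = factor_map f g -` B \<inter> range f"
    by blast
qed

lemma factor_map_differentiable_at_regular:
  assumes hf: "f holomorphic_on UNIV" and hg: "g holomorphic_on UNIV"
    and fibres: "\<And>a b. f a = f b \<Longrightarrow> g a = g b" and reg: "deriv f q \<noteq> 0"
  shows "factor_map f g field_differentiable at (f q)"
proof -
  obtain W \<psi> where W: "open W" "f q \<in> W" "\<psi> holomorphic_on W" "\<And>y. y \<in> W \<Longrightarrow> f (\<psi> y) = y"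
    "\<psi> (f q) = q"
    using holomorphic_local_inverse[OF hf open_UNIV UNIV_I reg] by blast
  have "(g \<circ> \<psi>) holomorphic_on W"
    using holomorphic_on_compose_gen[OF W(3) hg] by simp
  moreover have "\<And>y. y \<in> W \<Longrightarrow> (g \<circ> \<psi>) y = factor_map f g y"
    using factor_map_eq[of f g, OF fibres] W(4) by (metis comp_apply)
  ultimately have "factor_map f g holomorphic_on W"
    by (rule holomorphic_transform)
  then show ?thesis
    using W(1,2) holomorphic_on_imp_differentiable_at by blast
qed

lemma factor_map_holomorphic_on:
  assumes hf: "f holomorphic_on UNIV" and nc: "\<not> f constant_on UNIV"
    and hg: "g holomorphic_on UNIV" and fibres: "\<And>a b. f a = f b \<Longrightarrow> g a = g b"
  shows "factor_map f g holomorphic_on range f"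
  unfolding holomorphic_on_def
proof
  fix u assume "u \<in> range f"
  then obtain p where "u = f p" by blast
  have "\<exists>r>0. \<forall>z. z \<noteq> p \<and> dist z p < r \<longrightarrow> deriv f z \<noteq> 0"
    using entire_eventually_deriv_nonzero[OF hf nc, of p] by (simp add: eventually_at)
  then obtain r where r: "r > 0" "\<And>z. z \<in> ball p r \<Longrightarrow> z \<noteq> p \<Longrightarrow> deriv f z \<noteq> 0"
    by (auto simp: dist_commute)
  let ?V = "f ` ball p r"
  have "open ?V"
    by (rule entire_open_mapping[OF hf nc open_ball])
  have "factor_map f g holomorphic_on ?V"
  proof (rule no_isolated_singularity[where K = "{f p}"])
    have "continuous_on (range f) (factor_map f g)"
      using fibres holomorphic_on_imp_continuous_on[OF hg] entire_open_mapping[OF hf nc]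
      by (rule factor_map_continuous_on)
    then show "continuous_on ?V (factor_map f g)"
      by (rule continuous_on_subset) blast
    show "factor_map f g holomorphic_on ?V - {f p}"
      unfolding holomorphic_on_def
    proof
      fix v assume "v \<in> ?V - {f p}"
      then obtain w where w: "w \<in> ball p r" "w \<noteq> p" "v = f w" by blast
      then have "factor_map f g field_differentiable at v"
        using factor_map_differentiable_at_regular[OF hf hg fibres r(2)] by simp
      then show "factor_map f g field_differentiable at v within ?V - {f p}"
        by (rule field_differentiable_at_within)
    qed
  qed (use \<open>open ?V\<close> in simp_all)
  moreover have "u \<in> ?V"
    using \<open>u = f p\<close> r(1) by simp
  ultimately have "factor_map f g field_differentiable at u"
    using \<open>open ?V\<close> holomorphic_on_imp_differentiable_at by blast
  then show "factor_map f g field_differentiable at u within range f"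
    by (rule field_differentiable_at_within)
qed

lemma holomorphic_difference_quotient_compose:
  assumes hN: "N holomorphic_on R" and "open R" and hf: "f holomorphic_on UNIV" and "range f \<subseteq> R"
  obtains G where "\<And>z. (\<lambda>w. G w z) holomorphic_on UNIV" "\<And>w. (\<lambda>z. G w z) holomorphic_on UNIV"
    "\<And>w z. N (f w) - N (f z) = (f w - f z) * G w z"
proof -
  define Q where "Q v u = (if u = v then deriv N v else (N u - N v) / (u - v))" for v u
  have Q_sym: "Q v u = Q u v" for u v
    unfolding Q_def by (auto simp: divide_simps) (auto simp: algebra_simps)
  have "(\<lambda>w. Q (f z) (f w)) holomorphic_on UNIV" for z
  proof -
    have "Q (f z) holomorphic_on R"
      unfolding Q_def using pole_lemma[OF hN] assms(2,4) by (auto simp: interior_open)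
    then show ?thesis
      using holomorphic_on_compose_gen[OF hf, of "Q (f z)" R] assms(4) by (auto simp: comp_def)
  qed
  moreover have "N (f w) - N (f z) = (f w - f z) * Q (f z) (f w)" for w z
    by (cases "f w = f z") (simp_all add: Q_def)
  ultimately show ?thesis
    by (intro that[of "\<lambda>w z. Q (f z) (f w)"]) (simp_all add: Q_sym)
qed

theorem proposition5:
  fixes f g :: "complex \<Rightarrow> complex"
  assumes "f holomorphic_on UNIV" and "g holomorphic_on UNIV"
    and "\<not> (\<exists>c. \<forall>z. f z = c)" and "\<not> (\<exists>c. \<forall>z. g z = c)"
    and "Aut_subset f g"
  shows "(\<exists>H. H holomorphic_on UNIV \<and> (\<forall>z. deriv g z = H z * deriv f z))
    \<and> (\<exists>G :: complex \<Rightarrow> complex \<Rightarrow> complex.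
          (\<forall>z \<in> UNIV - g -` {g 0} - f -` {f 0}. (\<lambda>w. G w z) holomorphic_on UNIV)
        \<and> (\<forall>w. (\<lambda>z. G w z) holomorphic_on (UNIV - g -` {g 0} - f -` {f 0}))
        \<and> (\<forall>w. \<forall>z \<in> UNIV - g -` {g 0} - f -` {f 0}. g w - g z = (f w - f z) * G w z))"
proof -
  note hf = assms(1) and hg = assms(2)
  have nc: "\<not> f constant_on UNIV"
    using assms(3) unfolding constant_on_def by simp
  have fibres: "\<And>a b. f a = f b \<Longrightarrow> g a = g b"
    using Aut_subset_fibre[OF hf nc hg assms(5)] .
  define N where "N = factor_map f g"
  have g_eq: "g = N \<circ> f"
    using factor_map_eq[of f g, OF fibres] by (auto simp: N_def)
  have hN: "N holomorphic_on range f"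
    unfolding N_def by (rule factor_map_holomorphic_on[OF hf nc hg fibres])
  have "open (range f)"
    by (rule entire_open_mapping[OF hf nc open_UNIV])
  have "(\<lambda>z. deriv N (f z)) holomorphic_on UNIV"
    using holomorphic_deriv_compose[OF hN hf _ \<open>open (range f)\<close>] by simp
  moreover have "deriv g z = deriv N (f z) * deriv f z" for z
    unfolding g_eq using hf hN \<open>open (range f)\<close>
    by (intro deriv_chain) (auto intro: holomorphic_on_imp_differentiable_at)
  moreover obtain G where "\<And>z. (\<lambda>w. G w z) holomorphic_on UNIV" "\<And>w. (\<lambda>z. G w z) holomorphic_on UNIV"
    "\<And>w z. g w - g z = (f w - f z) * G w z"
    using holomorphic_difference_quotient_compose[OF hN \<open>open (range f)\<close> hf subset_refl] g_eq
    by (metis comp_apply)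
  ultimately show ?thesis
    by (blast intro: holomorphic_on_subset)
qed

end
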